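(* Let $d\ge1$ and consider the $d$-dimensional P-RAN process (see context). For $k\ge d+1$ let $P(k)=\lim_{t\to\infty}\mathbb{E}[N_t(k)]/(d+2+t)$, where $N_t(k)$ is the number of vertices of degree $k$ after $t$ steps. Then $$P(d+1)=\frac12,\qquad P(k)=\frac{dk-d^2-d+1}{dk-d^2+d+2}\,P(k-1)\quad\text{for } k>d+1.$$
   Context: P-RAN process in dimension $d$: at step $0$ the graph is a complete graph on $d+2$ vertices and the list $C_0$ consists of its $d+2$ $(d+1)$-cliques. At each step a clique $c$ is chosen uniformly at random from the current list; a new vertex $v$ is added and joined to all $d+1$ vertices of $c$; $c$ remains in the list and the $d+1$ cliques $\{v\}\cup(c\setminus\{u\})$, $u\in c$, are appended. After $t$ steps the graph has $d+2+t$ vertices and the list has $d+2+t(d+1)$ cliques. Every vertex has degree at least $d+1$. *)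

theory Defs
  imports "HOL-Probability.Probability"
begin

text \<open>State of the P-RAN process: (number of vertices n, with vertex set {0..<n};
  edge set, each edge a 2-element set of vertices; list of (d+1)-cliques).\<close>
type_synonym pran_state = "nat \<times> nat set set \<times> nat set list"

definition pran_init :: "nat \<Rightarrow> pran_state" where
  "pran_init d =
     (d + 2,
      {{x, y} | x y. x < d + 2 \<and> y < d + 2 \<and> x \<noteq> y},
      map (\<lambda>u. {0..<d + 2} - {u}) [0..<d + 2])"

definition pran_extend :: "pran_state \<Rightarrow> nat set \<Rightarrow> pran_state" where
  "pran_extend s c =
     (case s of (n, E, C) \<Rightarrow>
       (Suc n,
        E \<union> {{n, u} | u. u \<in> c},
        C @ map (\<lambda>u. insert n (c - {u})) (sorted_list_of_set c)))"

definition pran_step :: "pran_state \<Rightarrow> pran_state pmf" where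
  "pran_step s =
     (case s of (n, E, C) \<Rightarrow>
       map_pmf (\<lambda>i. pran_extend s (C ! i)) (pmf_of_set {..<length C}))"

primrec pran :: "nat \<Rightarrow> nat \<Rightarrow> pran_state pmf" where
  "pran d 0 = return_pmf (pran_init d)"
| "pran d (Suc t) = bind_pmf (pran d t) pran_step"

definition degree :: "nat set set \<Rightarrow> nat \<Rightarrow> nat" where
  "degree E x = card {y. {x, y} \<in> E}"

definition num_deg :: "pran_state \<Rightarrow> nat \<Rightarrow> nat" where
  "num_deg s k = (case s of (n, E, C) \<Rightarrow> card {x. x < n \<and> degree E x = k})"

end

theory Submission
  imports Defs
begin

text \<open>A vertex of degree k lies in exactly d k + 1 - d^2 cliques of the list: it enters the
  graph with degree d + 1 in d + 1 cliques, and each new neighbour brings d new cliques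
  containing it. The list has d + 2 + t (d + 1) entries, so in step t a fixed vertex of degree k
  gains a neighbour with probability (d k + 1 - d^2) / (d + 2 + t (d + 1)). Hence the
  expectations x(t) = E N_t(k) obey recurrences x(t+1) = (1 - a / (t + b)) x(t) + y(t), where y
  converges by induction on k, and such recurrences satisfy x(t) / t \<longrightarrow> lim y / (1 + a).\<close>

lemma expectation_bind_pmf_finite:
  fixes f :: "'b \<Rightarrow> real"
  assumes fin: "finite (set_pmf M)"
    and finN: "\<And>x. x \<in> set_pmf M \<Longrightarrow> finite (set_pmf (N x))"
  shows "measure_pmf.expectation (bind_pmf M N) f =
         measure_pmf.expectation M (\<lambda>x. measure_pmf.expectation (N x) f)"
proof -
  define S where "S = set_pmf (bind_pmf M N)"
  have finS: "finite S"
    unfolding S_def set_bind_pmf by (rule finite_UN_I[OF fin finN])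
  have expectation_N: "measure_pmf.expectation (N x) f = (\<Sum>a\<in>S. f a * pmf (N x) a)"
    if "x \<in> set_pmf M" for x
    by (rule integral_measure_pmf_real) (use finS that in \<open>auto simp: S_def\<close>)
  have pmf_bind_sum: "pmf (bind_pmf M N) a = (\<Sum>x\<in>set_pmf M. pmf (N x) a * pmf M x)" for a
    unfolding pmf_bind by (rule integral_measure_pmf_real) (auto simp: fin)
  have "measure_pmf.expectation (bind_pmf M N) f = (\<Sum>a\<in>S. f a * pmf (bind_pmf M N) a)"
    by (rule integral_measure_pmf_real[OF finS]) (simp add: S_def)
  also have "\<dots> = (\<Sum>x\<in>set_pmf M. (\<Sum>a\<in>S. f a * pmf (N x) a) * pmf M x)"
    by (simp add: pmf_bind_sum sum_distrib_left sum_distrib_right sum.swap[of _ S] mult.assoc)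
  also have "\<dots> = (\<Sum>x\<in>set_pmf M. measure_pmf.expectation (N x) f * pmf M x)"
    by (simp add: expectation_N)
  also have "\<dots> = measure_pmf.expectation M (\<lambda>x. measure_pmf.expectation (N x) f)"
    by (rule integral_measure_pmf_real[symmetric]) (auto simp: fin)
  finally show ?thesis .
qed

section \<open>Growth of solutions of linear recurrences\<close>

lemma tendsto_div_zero_of_increments_tendsto_zero:
  fixes z e :: "nat \<Rightarrow> real"
  assumes e: "e \<longlonglongrightarrow> 0" and D: "D > 0"
    and increment: "\<And>t. t \<ge> T\<^sub>0 \<Longrightarrow> \<bar>z (Suc t)\<bar> \<le> \<bar>z t\<bar> + \<bar>e t\<bar>"
  shows "(\<lambda>t. z t / (real t + D)) \<longlonglongrightarrow> 0"
proof (rule LIMSEQ_I)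
  fix r :: real assume r: "0 < r"
  obtain T\<^sub>1 where T\<^sub>1: "\<And>t. t \<ge> T\<^sub>1 \<Longrightarrow> \<bar>e t\<bar> < r / 2"
    using LIMSEQ_D[OF e, of "r / 2"] r by auto
  define T where "T = max T\<^sub>0 T\<^sub>1"
  have linear_bound: "\<bar>z t\<bar> \<le> \<bar>z T\<bar> + real (t - T) * (r / 2)" if "t \<ge> T" for t
    using that
  proof (induction t rule: dec_induct)
    case (step t)
    have "\<bar>z (Suc t)\<bar> < \<bar>z t\<bar> + r / 2"
      using increment[of t] T\<^sub>1[of t] step.hyps(1) by (simp add: T_def)
    moreover have "real (Suc t - T) * (r / 2) = real (t - T) * (r / 2) + r / 2"
      using step.hyps(1) by (simp add: Suc_diff_le distrib_right)
    ultimately show ?case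
      using step.IH by linarith
  qed simp
  show "\<exists>N. \<forall>n\<ge>N. norm (z n / (real n + D) - 0) < r"
  proof (intro exI allI impI)
    fix n assume n: "n \<ge> max T (nat \<lceil>2 * \<bar>z T\<bar> / r\<rceil>)"
    then have "2 * \<bar>z T\<bar> \<le> r * real n"
      using r by (simp add: field_simps)
    moreover have "real (n - T) * (r / 2) \<le> r / 2 * real n"
      using r n by (simp add: of_nat_diff)
    moreover have "0 < r * D"
      using r D by simp
    ultimately have "\<bar>z n\<bar> < r * (real n + D)"
      using linear_bound[of n] n unfolding distrib_left by linarith
    then show "norm (z n / (real n + D) - 0) < r"
      using D by (simp add: abs_divide field_simps)
  qed
qed

text \<open>Subtracting the particular solution c (t + \<beta>), with c = \<gamma> / (1 + \<alpha>), leaves a recurrence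
  with a contraction factor and a vanishing inhomogeneity.\<close>

lemma tendsto_div_of_linear_recurrence:
  fixes x y :: "nat \<Rightarrow> real"
  assumes recurrence: "\<And>t. x (Suc t) = (1 - \<alpha> / (real t + \<beta>)) * x t + y t"
    and y: "y \<longlonglongrightarrow> \<gamma>" and \<alpha>: "\<alpha> \<ge> 0" and \<beta>: "\<beta> > 0" and D: "D > 0"
  shows "(\<lambda>t. x t / (real t + D)) \<longlonglongrightarrow> \<gamma> / (1 + \<alpha>)"
proof -
  define c where "c = \<gamma> / (1 + \<alpha>)"
  define z where "z t = x t - c * (real t + \<beta>)" for t
  have z_recurrence: "z (Suc t) = (1 - \<alpha> / (real t + \<beta>)) * z t + (y t - \<gamma>)" for t
  proof -
    have "real t + \<beta> \<noteq> 0" and \<gamma>: "\<gamma> = c * (1 + \<alpha>)"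
      using \<alpha> \<beta> by (simp_all add: c_def)
    then show ?thesis
      unfolding z_def recurrence \<gamma> by (simp add: field_simps)
  qed
  have "\<bar>z (Suc t)\<bar> \<le> \<bar>z t\<bar> + \<bar>y t - \<gamma>\<bar>" if "t \<ge> nat \<lceil>\<alpha>\<rceil>" for t
  proof -
    have "0 \<le> 1 - \<alpha> / (real t + \<beta>)" and "1 - \<alpha> / (real t + \<beta>) \<le> 1"
      using that \<alpha> \<beta> by (simp_all add: field_simps)
    then have "\<bar>(1 - \<alpha> / (real t + \<beta>)) * z t\<bar> \<le> \<bar>z t\<bar>"
      by (simp add: abs_mult mult_left_le_one_le)
    then show ?thesis
      unfolding z_recurrence by linarith
  qed
  moreover have "(\<lambda>t. y t - \<gamma>) \<longlonglongrightarrow> 0"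
    using tendsto_diff[OF y tendsto_const[of \<gamma>]] by simp
  ultimately have z_lim: "(\<lambda>t. z t / (real t + D)) \<longlonglongrightarrow> 0"
    using tendsto_div_zero_of_increments_tendsto_zero D by blast
  have "(\<lambda>t. 1 / (real t + D)) \<longlonglongrightarrow> 0"
    by (rule tendsto_divide_0[OF tendsto_const tendsto_add_filterlim_at_infinity'[OF
        filterlim_at_top_imp_at_infinity[OF filterlim_real_sequentially] tendsto_const]])
  then have "(\<lambda>t. c + c * (\<beta> - D) * (1 / (real t + D))) \<longlonglongrightarrow> c"
    using tendsto_add[OF tendsto_const tendsto_mult[OF tendsto_const]] by fastforce
  moreover have "x t / (real t + D) = z t / (real t + D) + (c + c * (\<beta> - D) * (1 / (real t + D)))"
    for t
  proof -
    have "real t + D \<noteq> 0"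
      using D by linarith
    then have "c + c * (\<beta> - D) * (1 / (real t + D)) = c * (real t + \<beta>) / (real t + D)"
      by (simp add: field_simps)
    then show ?thesis
      by (simp add: z_def diff_divide_distrib)
  qed
  ultimately show ?thesis
    using tendsto_add[OF z_lim] by (simp add: c_def)
qed

section \<open>The invariant of the P-RAN process\<close>

definition clique_count :: "nat set list \<Rightarrow> nat \<Rightarrow> nat" where
  "clique_count C x = length (filter (\<lambda>c. x \<in> c) C)"

definition edges_on :: "nat \<Rightarrow> nat set set \<Rightarrow> bool" where
  "edges_on n E \<longleftrightarrow> (\<forall>e\<in>E. \<exists>x y. e = {x, y} \<and> x < n \<and> y < n \<and> x \<noteq> y)"

definition clique_count_of_degree :: "nat \<Rightarrow> nat \<Rightarrow> real" where
  "clique_count_of_degree d k = real d * real k + 1 - real d ^ 2"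

definition pran_invariant :: "nat \<Rightarrow> nat \<Rightarrow> pran_state \<Rightarrow> bool" where
  "pran_invariant d t s \<longleftrightarrow> (case s of (n, E, C) \<Rightarrow>
     length C = d + 2 + t * (d + 1) \<and>
     (\<forall>c\<in>set C. c \<subseteq> {..<n} \<and> card c = d + 1) \<and> edges_on n E \<and>
     (\<forall>x<n. d + 1 \<le> degree E x \<and> real (clique_count C x) = clique_count_of_degree d (degree E x)))"

lemma clique_count_of_degree_Suc: "clique_count_of_degree d (Suc k) = clique_count_of_degree d k + real d"
  by (simp add: clique_count_of_degree_def algebra_simps)

lemma clique_count_of_degree_min_degree: "clique_count_of_degree d (Suc d) = real d + 1"
  by (simp add: clique_count_of_degree_def power2_eq_square algebra_simps)

lemma clique_count_of_degree_ge: "k \<ge> d + 1 \<Longrightarrow> clique_count_of_degree d k \<ge> real d + 1"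
  using mult_left_mono[of "real d + 1" "real k" "real d"]
  by (simp add: clique_count_of_degree_def power2_eq_square algebra_simps)

lemma neighbours_subset: "edges_on n E \<Longrightarrow> {y. {x, y} \<in> E} \<subseteq> {..<n}"
  unfolding edges_on_def by (auto simp: doubleton_eq_iff)

lemma degree_join_new_vertex:
  assumes E: "edges_on n E" and c: "c \<subseteq> {..<n}" and x: "x < n"
  shows "degree (E \<union> {{n, u} | u. u \<in> c}) x = degree E x + of_bool (x \<in> c)"
proof -
  have "finite {y. {x, y} \<in> E}" and "n \<notin> {y. {x, y} \<in> E}"
    using neighbours_subset[OF E, of x] finite_subset by auto
  moreover have "{y. {x, y} \<in> E \<union> {{n, u} | u. u \<in> c}} =
      {y. {x, y} \<in> E} \<union> (if x \<in> c then {n} else {})"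
    using x c by (auto simp: doubleton_eq_iff)
  ultimately show ?thesis
    unfolding degree_def by (simp add: card_insert_if)
qed

lemma degree_new_vertex:
  assumes "edges_on n E" and "c \<subseteq> {..<n}"
  shows "degree (E \<union> {{n, u} | u. u \<in> c}) n = card c"
proof -
  have "{y. {n, y} \<in> E \<union> {{n, u} | u. u \<in> c}} = c"
    using assms unfolding edges_on_def by (auto simp: doubleton_eq_iff)
  then show ?thesis
    unfolding degree_def by simp
qed

lemma clique_count_append [simp]: "clique_count (A @ B) x = clique_count A x + clique_count B x"
  by (simp add: clique_count_def)

lemma clique_count_new_cliques:
  assumes "finite c"
  shows "clique_count (map (\<lambda>u. insert n (c - {u})) (sorted_list_of_set c)) x =
         (if x = n then card c else if x \<in> c then card c - 1 else 0)"
proof -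
  have "clique_count (map (\<lambda>u. insert n (c - {u})) (sorted_list_of_set c)) x =
      card (c \<inter> {u. x \<in> insert n (c - {u})})"
    unfolding clique_count_def using assms
    by (simp add: distinct_length_filter o_def Int_commute)
  also have "c \<inter> {u. x \<in> insert n (c - {u})} = (if x = n then c else if x \<in> c then c - {x} else {})"
    by auto
  finally show ?thesis
    using assms by simp
qed

lemma clique_count_eq_sum: "real (clique_count C x) = (\<Sum>i<length C. of_bool (x \<in> C ! i))"
  unfolding clique_count_def length_filter_conv_card by (simp add: Int_def)

lemma pran_invariant_init: "pran_invariant d 0 (pran_init d)"
proof -
  let ?E = "{{x, y} | x y. x < d + 2 \<and> y < d + 2 \<and> x \<noteq> y}"
  let ?C = "map (\<lambda>u. {0..<d + 2} - {u}) [0..<d + 2]"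
  have degree_init: "degree ?E x = d + 1" if "x < d + 2" for x
  proof -
    have "{y. {x, y} \<in> ?E} = {..<d + 2} - {x}"
      using that by (auto simp: doubleton_eq_iff)
    then show ?thesis
      using that by (simp add: degree_def)
  qed
  have clique_count_init: "clique_count ?C x = d + 1" if "x < d + 2" for x
  proof -
    have "clique_count ?C x = card ({u. x \<in> {0..<d + 2} - {u}} \<inter> {0..<d + 2})"
      unfolding clique_count_def filter_map length_map
      by (simp only: distinct_length_filter[OF distinct_upt] o_def set_upt)
    also have "{u. x \<in> {0..<d + 2} - {u}} \<inter> {0..<d + 2} = {0..<d + 2} - {x}"
      using that by auto
    finally show ?thesis
      using that by simp
  qed
  have "\<forall>x<d + 2. d + 1 \<le> degree ?E x \<and> real (clique_count ?C x) = clique_count_of_degree d (degree ?E x)"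
  proof (intro allI impI)
    fix x assume "x < d + 2"
    then show "d + 1 \<le> degree ?E x \<and> real (clique_count ?C x) = clique_count_of_degree d (degree ?E x)"
      using degree_init clique_count_init clique_count_of_degree_min_degree by simp
  qed
  moreover have "\<forall>c\<in>set ?C. c \<subseteq> {..<d + 2} \<and> card c = d + 1"
    by auto
  moreover have "edges_on (d + 2) ?E"
    unfolding edges_on_def by blast
  ultimately show ?thesis
    unfolding pran_init_def pran_invariant_def by simp
qed

lemma cliques_pran_extend:
  assumes cliques: "\<forall>b\<in>set C. b \<subseteq> {..<n} \<and> card b = d + 1" and c: "c \<in> set C"
  shows "\<forall>b\<in>set (C @ map (\<lambda>u. insert n (c - {u})) (sorted_list_of_set c)).
           b \<subseteq> {..<Suc n} \<and> card b = d + 1"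
proof
  have c_sub: "c \<subseteq> {..<n}" and c_card: "card c = d + 1"
    using cliques c by auto
  then have c_fin: "finite c"
    using finite_subset by blast
  fix b assume "b \<in> set (C @ map (\<lambda>u. insert n (c - {u})) (sorted_list_of_set c))"
  then consider "b \<in> set C" | u where "u \<in> c" "b = insert n (c - {u})"
    using c_fin by auto
  then show "b \<subseteq> {..<Suc n} \<and> card b = d + 1"
  proof cases
    case 2
    have "n \<notin> c - {u}"
      using c_sub by auto
    then show ?thesis
      using 2 c_sub c_fin c_card by auto
  qed (use cliques in \<open>force simp: subset_iff\<close>)
qed

text \<open>A vertex of c gains one neighbour and the d new cliques containing it; the new vertex
  starts with degree d + 1 in the d + 1 new cliques.\<close>

lemma degree_clique_count_pran_extend:
  assumes cliques: "\<forall>b\<in>set C. b \<subseteq> {..<n} \<and> card b = d + 1" and c: "c \<in> set C"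
    and E: "edges_on n E"
    and counts: "\<forall>x<n. d + 1 \<le> degree E x \<and>
                   real (clique_count C x) = clique_count_of_degree d (degree E x)"
    and x: "x < Suc n"
  defines "E' \<equiv> E \<union> {{n, u} | u. u \<in> c}"
    and "C' \<equiv> C @ map (\<lambda>u. insert n (c - {u})) (sorted_list_of_set c)"
  shows "d + 1 \<le> degree E' x \<and> real (clique_count C' x) = clique_count_of_degree d (degree E' x)"
proof -
  have c_sub: "c \<subseteq> {..<n}" and c_card: "card c = d + 1"
    using cliques c by auto
  then have c_fin: "finite c"
    using finite_subset by blast
  show ?thesis
  proof (cases "x = n")
    case True
    have "clique_count C n = 0"
      using cliques unfolding clique_count_def by (auto simp: filter_empty_conv)
    with True show ?thesis
      using degree_new_vertex[OF E c_sub] clique_count_new_cliques[OF c_fin] c_card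
        clique_count_of_degree_min_degree
      by (simp add: E'_def C'_def)
  next
    case False
    with x have "x < n"
      by simp
    then show ?thesis
      using counts degree_join_new_vertex[OF E c_sub] clique_count_new_cliques[OF c_fin, of n x] False c_card
      by (auto simp: E'_def C'_def clique_count_of_degree_Suc)
  qed
qed

lemma pran_invariant_extend:
  assumes inv: "pran_invariant d t (n, E, C)" and c: "c \<in> set C"
  shows "pran_invariant d (Suc t) (pran_extend (n, E, C) c)"
proof -
  have cliques: "\<forall>b\<in>set C. b \<subseteq> {..<n} \<and> card b = d + 1" and E: "edges_on n E"
    and counts: "\<forall>x<n. d + 1 \<le> degree E x \<and>
                   real (clique_count C x) = clique_count_of_degree d (degree E x)"
    and length_C: "length C = d + 2 + t * (d + 1)"
    using inv by (auto simp: pran_invariant_def)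
  have c_sub: "c \<subseteq> {..<n}" and c_card: "card c = d + 1"
    using cliques c by auto
  then have "finite c"
    using finite_subset by blast
  then have "length (C @ map (\<lambda>u. insert n (c - {u})) (sorted_list_of_set c)) = d + 2 + Suc t * (d + 1)"
    using length_C c_card by simp
  moreover have "edges_on (Suc n) (E \<union> {{n, u} | u. u \<in> c})"
    using E c_sub unfolding edges_on_def by fastforce
  ultimately show ?thesis
    using cliques_pran_extend[OF cliques c] degree_clique_count_pran_extend[OF cliques c E counts]
    unfolding pran_invariant_def pran_extend_def case_prod_conv by blast
qed

lemma set_pmf_pran_step:
  assumes "pran_invariant d t (n, E, C)"
  shows "set_pmf (pran_step (n, E, C)) = (\<lambda>i. pran_extend (n, E, C) (C ! i)) ` {..<length C}"
  using assms by (simp add: pran_invariant_def pran_step_def set_pmf_of_set lessThan_empty_iff)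

lemma pran_step_preserves_invariant:
  assumes "pran_invariant d t s"
  shows "finite (set_pmf (pran_step s)) \<and> (\<forall>s'\<in>set_pmf (pran_step s). pran_invariant d (Suc t) s')"
proof -
  obtain n E C where s: "s = (n, E, C)"
    by (cases s)
  show ?thesis
    using assms unfolding s set_pmf_pran_step[OF assms[unfolded s]]
    by (auto intro!: pran_invariant_extend)
qed

lemma pran_support: "finite (set_pmf (pran d t)) \<and> (\<forall>s\<in>set_pmf (pran d t). pran_invariant d t s)"
proof (induction t)
  case 0
  show ?case
    using pran_invariant_init by auto
next
  case (Suc t)
  then show ?case
    using pran_step_preserves_invariant by (auto intro!: finite_UN_I)
qed

lemma num_deg_eq_sum: "real (num_deg (n, E, C) k) = (\<Sum>x<n. of_bool (degree E x = k))"
  by (simp add: num_deg_def Int_def)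

lemma num_deg_pran_extend:
  assumes inv: "pran_invariant d t (n, E, C)" and c: "c \<in> set C"
  shows "real (num_deg (pran_extend (n, E, C) c) k) =
     (\<Sum>x<n. of_bool (degree E x + of_bool (x \<in> c) = k)) + of_bool (k = d + 1)"
proof -
  have E: "edges_on n E" and c_sub: "c \<subseteq> {..<n}" and c_card: "card c = d + 1"
    using inv c by (auto simp: pran_invariant_def)
  have "(\<Sum>x<n. of_bool (degree (E \<union> {{n, u} | u. u \<in> c}) x = k)) =
      (\<Sum>x<n. of_bool (degree E x + of_bool (x \<in> c) = k) :: real)"
    by (rule sum.cong) (simp_all add: degree_join_new_vertex[OF E c_sub])
  then show ?thesis
    by (simp add: pran_extend_def num_deg_eq_sum degree_new_vertex[OF E c_sub] c_card eq_commute)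
qed

lemma sum_of_bool_degree_gain:
  fixes m k :: nat
  assumes "k \<ge> 1"
  shows "(\<Sum>i<length C. of_bool (m + of_bool (x \<in> C ! i) = k) :: real) =
         of_bool (m = k - 1) * real (clique_count C x) +
         of_bool (m = k) * (real (length C) - real (clique_count C x))"
proof -
  have "of_bool (m + of_bool (x \<in> C ! i) = k) =
      of_bool (m = k - 1) * of_bool (x \<in> C ! i) + of_bool (m = k) * (1 - of_bool (x \<in> C ! i) :: real)"
    for i
    using assms by auto
  then show ?thesis
    by (simp add: clique_count_eq_sum sum.distrib sum_subtractf flip: sum_distrib_left)
qed

lemma sum_num_deg_pran_extend:
  assumes inv: "pran_invariant d t (n, E, C)" and k: "k \<ge> 1"
  shows "(\<Sum>i<length C. real (num_deg (pran_extend (n, E, C) (C ! i)) k)) =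
     clique_count_of_degree d (k - 1) * real (num_deg (n, E, C) (k - 1)) +
     (real (length C) - clique_count_of_degree d k) * real (num_deg (n, E, C) k) +
     real (length C) * of_bool (k = d + 1)"
proof -
  let ?L = "real (length C)"
  have weight: "real (clique_count C x) = clique_count_of_degree d (degree E x)" if "x < n" for x
    using inv that by (auto simp: pran_invariant_def)
  have "(\<Sum>i<length C. real (num_deg (pran_extend (n, E, C) (C ! i)) k)) =
      (\<Sum>i<length C. (\<Sum>x<n. of_bool (degree E x + of_bool (x \<in> C ! i) = k)) + of_bool (k = d + 1))"
    by (intro sum.cong refl num_deg_pran_extend[OF inv]) simp
  also have "\<dots> = (\<Sum>x<n. \<Sum>i<length C. of_bool (degree E x + of_bool (x \<in> C ! i) = k)) +
      ?L * of_bool (k = d + 1)"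
    unfolding sum.distrib by (simp add: sum.swap[of _ "{..<n}"] del: sum_of_bool_eq)
  also have "(\<Sum>x<n. \<Sum>i<length C. of_bool (degree E x + of_bool (x \<in> C ! i) = k)) =
      (\<Sum>x<n. clique_count_of_degree d (k - 1) * of_bool (degree E x = k - 1) +
               (?L - clique_count_of_degree d k) * of_bool (degree E x = k))"
    by (intro sum.cong refl) (auto simp: sum_of_bool_degree_gain[OF k] weight)
  also have "\<dots> = clique_count_of_degree d (k - 1) * real (num_deg (n, E, C) (k - 1)) +
      (?L - clique_count_of_degree d k) * real (num_deg (n, E, C) k)"
    by (simp add: num_deg_eq_sum sum.distrib sum_distrib_left)
  finally show ?thesis .
qed

lemma expectation_pran_step:
  assumes inv: "pran_invariant d t s" and k: "k \<ge> 1"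
  defines "L \<equiv> real (d + 2 + t * (d + 1))"
  shows "measure_pmf.expectation (pran_step s) (\<lambda>s. real (num_deg s k)) =
    (1 - clique_count_of_degree d k / L) * real (num_deg s k) +
    clique_count_of_degree d (k - 1) / L * real (num_deg s (k - 1)) + of_bool (k = d + 1)"
proof -
  obtain n E C where s: "s = (n, E, C)"
    by (cases s)
  have length_C: "real (length C) = L"
    using inv by (simp add: s pran_invariant_def L_def)
  have "L > 0"
    unfolding L_def by (simp only: of_nat_0_less_iff)
  moreover have "{..<length C} \<noteq> {}"
    using inv by (simp add: s pran_invariant_def lessThan_empty_iff)
  ultimately show ?thesis
    unfolding s pran_step_def
    using sum_num_deg_pran_extend[OF inv[unfolded s] k]
    by (simp add: integral_pmf_of_set length_C field_simps)
qed

definition expected_num_deg :: "nat \<Rightarrow> nat \<Rightarrow> nat \<Rightarrow> real" where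
  "expected_num_deg d t k = measure_pmf.expectation (pran d t) (\<lambda>s. real (num_deg s k))"

lemma expected_num_deg_Suc:
  fixes d t :: nat
  assumes k: "k \<ge> 1"
  defines "L \<equiv> real (d + 2 + t * (d + 1))"
  shows "expected_num_deg d (Suc t) k =
    (1 - clique_count_of_degree d k / L) * expected_num_deg d t k +
    clique_count_of_degree d (k - 1) / L * expected_num_deg d t (k - 1) + of_bool (k = d + 1)"
proof -
  have fin: "finite (set_pmf (pran d t))" and inv: "\<And>s. s \<in> set_pmf (pran d t) \<Longrightarrow> pran_invariant d t s"
    using pran_support[of d t] by auto
  have "expected_num_deg d (Suc t) k =
      measure_pmf.expectation (pran d t)
        (\<lambda>s. measure_pmf.expectation (pran_step s) (\<lambda>s. real (num_deg s k)))"
    unfolding expected_num_deg_def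
    using pran_step_preserves_invariant[OF inv] by (simp add: expectation_bind_pmf_finite[OF fin])
  also have "\<dots> = measure_pmf.expectation (pran d t)
      (\<lambda>s. (1 - clique_count_of_degree d k / L) * real (num_deg s k) +
           clique_count_of_degree d (k - 1) / L * real (num_deg s (k - 1)) + of_bool (k = d + 1))"
    using inv expectation_pran_step[OF _ k]
    by (intro integral_cong_AE) (auto simp: AE_measure_pmf_iff L_def)
  also have "\<dots> = (1 - clique_count_of_degree d k / L) * expected_num_deg d t k +
      clique_count_of_degree d (k - 1) / L * expected_num_deg d t (k - 1) + of_bool (k = d + 1)"
    using fin by (simp add: expected_num_deg_def integrable_measure_pmf_finite)
  finally show ?thesis .
qed

lemma expected_num_deg_eq_0:
  assumes "k \<le> d"
  shows "expected_num_deg d t k = 0"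
proof -
  have "num_deg s k = 0" if "s \<in> set_pmf (pran d t)" for s
  proof -
    obtain n E C where s: "s = (n, E, C)"
      by (cases s)
    have "\<forall>x<n. d + 1 \<le> degree E x"
      using pran_support[of d t] that by (auto simp: s pran_invariant_def)
    then show ?thesis
      using assms by (fastforce simp: s num_deg_def)
  qed
  then show ?thesis
    unfolding expected_num_deg_def by (simp add: integral_eq_zero_AE AE_measure_pmf_iff)
qed

section \<open>Limit densities\<close>

primrec pran_degree_density :: "nat \<Rightarrow> nat \<Rightarrow> real" where
  "pran_degree_density d 0 = 1 / 2"
| "pran_degree_density d (Suc j) =
     clique_count_of_degree d (d + 1 + j) / (real d + 1 + clique_count_of_degree d (d + 2 + j)) * pran_degree_density d j"

text \<open>Writing d + 2 + t (d + 1) = (d + 1) (t + \<beta>) puts the recurrence for the expectations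
  into the form treated by the lemma on linear recurrences.\<close>

lemma tendsto_expected_num_deg_step:
  fixes d k :: nat
  assumes k: "k \<ge> d + 1" and D: "D > 0"
    and previous: "(\<lambda>t. expected_num_deg d t (k - 1) / (real t + (real d + 2) / (real d + 1))) \<longlonglongrightarrow> q"
  shows "(\<lambda>t. expected_num_deg d t k / (real t + D)) \<longlonglongrightarrow>
    (clique_count_of_degree d (k - 1) * q + of_bool (k = d + 1) * (real d + 1)) /
    (real d + 1 + clique_count_of_degree d k)"
proof -
  define \<alpha> where "\<alpha> = clique_count_of_degree d k / (real d + 1)"
  define \<beta> where "\<beta> = (real d + 2) / (real d + 1)"
  define y where "y t = clique_count_of_degree d (k - 1) / (real d + 1) *
    (expected_num_deg d t (k - 1) / (real t + \<beta>)) + of_bool (k = d + 1)" for t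
  have \<alpha>: "\<alpha> \<ge> 0" and \<beta>: "\<beta> > 0"
    using clique_count_of_degree_ge[OF k] by (simp_all add: \<alpha>_def \<beta>_def)
  have L: "real (d + 2 + t * (d + 1)) = (real d + 1) * (real t + \<beta>)" for t
    by (simp add: \<beta>_def field_simps)
  have "expected_num_deg d (Suc t) k = (1 - \<alpha> / (real t + \<beta>)) * expected_num_deg d t k + y t" for t
    using expected_num_deg_Suc[of k d t, unfolded L] k by (simp add: \<alpha>_def y_def)
  moreover have "y \<longlonglongrightarrow> clique_count_of_degree d (k - 1) / (real d + 1) * q + of_bool (k = d + 1)"
    unfolding y_def \<beta>_def by (intro tendsto_intros previous)
  ultimately have lim: "(\<lambda>t. expected_num_deg d t k / (real t + D)) \<longlonglongrightarrow>
      (clique_count_of_degree d (k - 1) / (real d + 1) * q + of_bool (k = d + 1)) / (1 + \<alpha>)"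
    by (rule tendsto_div_of_linear_recurrence[where x = "\<lambda>t. expected_num_deg d t k"]) (use \<alpha> \<beta> D in auto)
  have frac: "(a / m * q + b) / (1 + W / m) = (a * q + b * m) / (m + W)"
    if "m > 0" and "m + W > 0" for a b m W :: real
    using that by (simp add: divide_simps)
  have "(clique_count_of_degree d (k - 1) / (real d + 1) * q + of_bool (k = d + 1)) / (1 + \<alpha>) =
      (clique_count_of_degree d (k - 1) * q + of_bool (k = d + 1) * (real d + 1)) /
      (real d + 1 + clique_count_of_degree d k)"
    unfolding \<alpha>_def by (rule frac) (use clique_count_of_degree_ge[OF k] in simp_all)
  with lim show ?thesis
    by simp
qed

lemma tendsto_expected_num_deg:
  assumes "D > 0"
  shows "(\<lambda>t. expected_num_deg d t (d + 1 + j) / (real t + D)) \<longlonglongrightarrow> pran_degree_density d j"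
  using assms
proof (induction j arbitrary: D)
  case 0
  have half: "(clique_count_of_degree d (d + 1 - 1) * 0 + of_bool (d + 1 = d + 1) * (real d + 1)) /
      (real d + 1 + clique_count_of_degree d (d + 1)) = 1 / 2"
    by (simp add: clique_count_of_degree_min_degree divide_simps)
  have "(\<lambda>t. expected_num_deg d t d / (real t + (real d + 2) / (real d + 1))) \<longlonglongrightarrow> 0"
    by (simp add: expected_num_deg_eq_0)
  then have "(\<lambda>t. expected_num_deg d t (d + 1) / (real t + D)) \<longlonglongrightarrow>
      (clique_count_of_degree d (d + 1 - 1) * 0 + of_bool (d + 1 = d + 1) * (real d + 1)) /
      (real d + 1 + clique_count_of_degree d (d + 1))"
    using 0 by (intro tendsto_expected_num_deg_step) simp_all
  then show ?case
    unfolding half by simp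
next
  case (Suc j)
  have "(\<lambda>t. expected_num_deg d t (d + 1 + j) / (real t + (real d + 2) / (real d + 1)))
      \<longlonglongrightarrow> pran_degree_density d j"
    by (rule Suc.IH) simp
  then show ?case
    using tendsto_expected_num_deg_step[of d "d + 1 + Suc j" D "pran_degree_density d j"] Suc.prems
    by simp
qed

theorem mainTheorem3:
  fixes d :: nat
  assumes "d \<ge> 1"
  shows "\<exists>P :: nat \<Rightarrow> real.
     (\<forall>k \<ge> d + 1.
        (\<lambda>t. measure_pmf.expectation (pran d t) (\<lambda>s. real (num_deg s k)) / real (d + 2 + t))
          \<longlonglongrightarrow> P k)
   \<and> P (d + 1) = 1 / 2
   \<and> (\<forall>k > d + 1.
        P k = (real d * real k - real d ^ 2 - real d + 1) /
              (real d * real k - real d ^ 2 + real d + 2) * P (k - 1))"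
proof -
  define P where "P k = pran_degree_density d (k - (d + 1))" for k
  have "(\<lambda>t. measure_pmf.expectation (pran d t) (\<lambda>s. real (num_deg s k)) / real (d + 2 + t))
      \<longlonglongrightarrow> P k" if "k \<ge> d + 1" for k
  proof -
    have "(\<lambda>t. expected_num_deg d t k / (real t + real (d + 2))) \<longlonglongrightarrow> P k"
      using tendsto_expected_num_deg[of "real (d + 2)" d "k - (d + 1)"] that by (simp add: P_def)
    then show ?thesis
      by (simp add: expected_num_deg_def ac_simps)
  qed
  moreover have "P (d + 1) = 1 / 2"
    by (simp add: P_def)
  moreover have "P k = (real d * real k - real d ^ 2 - real d + 1) /
      (real d * real k - real d ^ 2 + real d + 2) * P (k - 1)" if "k > d + 1" for k
  proof -
    define j where "j = k - (d + 2)"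
    have k: "k = d + 2 + j"
      using that by (simp add: j_def)
    have "P k = pran_degree_density d (Suc j)" and "P (k - 1) = pran_degree_density d j"
      by (simp_all add: P_def k)
    moreover have "clique_count_of_degree d (d + 1 + j) = real d * real k - real d ^ 2 - real d + 1"
      and "real d + 1 + clique_count_of_degree d (d + 2 + j) = real d * real k - real d ^ 2 + real d + 2"
      by (simp_all add: k clique_count_of_degree_def algebra_simps)
    ultimately show ?thesis
      by (simp only: pran_degree_density.simps)
  qed
  ultimately show ?thesis
    by blast
qed

end
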